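(* (1) For $N<N'$, $\pi_{N'}\circ\iota_{N,N'}=\pi_N$. (2) For all $N_1,N_2\ge0$, $\pi_{N_1+N_2}\circ\mathfrak m_{N_1,N_2}=\mathfrak m\circ(\pi_{N_1}\times\pi_{N_2})$, where $\mathfrak m:L^-\mathrm{GL}_K\times L^-\mathrm{GL}_K\to L^-\mathrm{GL}_K$ is the group multiplication.
   Context: $\mathcal M(N,K)=\mathrm{Rep}(N,K)/\!/\mathrm{GL}_N$, with $\mathrm{Rep}(N,K)$ the triples $(B,\psi,\overline\psi)$, $B\in\mathrm{Mat}_{N\times N}(\mathbb C)$, $\psi\in\mathrm{Mat}_{N\times K}$, $\overline\psi\in\mathrm{Mat}_{K\times N}$, and $g\cdot(B,\psi,\overline\psi)=(gBg^{-1},g\psi,\overline\psi g^{-1})$. $L^-\mathrm{GL}_K$ is the group (under multiplication of matrix power series) of series $1+\sum_{i\ge1}g_iz^{-i}$, $g_i\in\mathfrak{gl}_K$. $\pi_N(B,\psi,\overline\psi)=1+\overline\psi(z-\widetilde B/2)^{-1}\psi$, $\widetilde B=B+\psi\overline\psi$. $\iota_{N,N'}(B,\psi,\overline\psi)=(\mathrm{diag}(B,0),\binom{\psi}{0},(\overline\psi\ 0))$. $\mathfrak m_{N_1,N_2}$ sends $(B^{(1)},\psi^{(1)},\overline\psi^{(1)})\times(B^{(2)},\psi^{(2)},\overline\psi^{(2)})$ to $\left(\begin{bmatrix}B^{(1)}&\psi^{(1)}\overline\psi^{(2)}\\-\psi^{(2)}\overline\psi^{(1)}&B^{(2)}\end{bmatrix},\begin{bmatrix}\psi^{(1)}\\\psi^{(2)}\end{bmatrix},\begin{bmatrix}\overline\psi^{(1)}&\overline\psi^{(2)}\end{bmatrix}\right)$.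 *)

theory Defs
  imports "Jordan_Normal_Form.Matrix"
begin

type_synonym triple = "complex mat \<times> complex mat \<times> complex mat"

definition Rep :: "nat \<Rightarrow> nat \<Rightarrow> triple set" where
  "Rep N K = {(B, \<psi>, \<psi>b). B \<in> carrier_mat N N \<and> \<psi> \<in> carrier_mat N K \<and> \<psi>b \<in> carrier_mat K N}"

text \<open>Elements of L^- GL_K are represented by their coefficient sequence:
  g 0 = 1 (K x K identity), g i = i-th coefficient of z^{-i}.\<close>
definition in_LminusGL :: "nat \<Rightarrow> (nat \<Rightarrow> complex mat) \<Rightarrow> bool" where
  "in_LminusGL K g \<longleftrightarrow> g 0 = 1\<^sub>m K \<and> (\<forall>i. g i \<in> carrier_mat K K)"

text \<open>Group multiplication in L^- GL_K: Cauchy product of matrix power series in z^{-1}.\<close>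
definition loop_mult :: "nat \<Rightarrow> (nat \<Rightarrow> complex mat) \<Rightarrow> (nat \<Rightarrow> complex mat) \<Rightarrow> nat \<Rightarrow> complex mat" where
  "loop_mult K g h n = mat K K (\<lambda>(a, b). \<Sum>i\<le>n. (g i * h (n - i)) $$ (a, b))"

definition Btilde :: "triple \<Rightarrow> complex mat" where
  "Btilde x = (case x of (B, \<psi>, \<psi>b) \<Rightarrow> B + \<psi> * \<psi>b)"

text \<open>pi_N(B,psi,psibar) = 1 + psibar (z - Btilde/2)^{-1} psi
   = 1 + sum_{i>=0} psibar (Btilde/2)^i psi z^{-(i+1)}, as coefficient sequence.\<close>
definition pi_map :: "nat \<Rightarrow> triple \<Rightarrow> nat \<Rightarrow> complex mat" where
  "pi_map K x i = (case x of (B, \<psi>, \<psi>b) \<Rightarrow>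
     (case i of 0 \<Rightarrow> 1\<^sub>m K
      | Suc j \<Rightarrow> \<psi>b * ((1/2 :: complex) \<cdot>\<^sub>m Btilde x) ^\<^sub>m j * \<psi>))"

definition iota :: "nat \<Rightarrow> nat \<Rightarrow> nat \<Rightarrow> triple \<Rightarrow> triple" where
  "iota K N N' x = (case x of (B, \<psi>, \<psi>b) \<Rightarrow>
     (four_block_mat B (0\<^sub>m N (N' - N)) (0\<^sub>m (N' - N) N) (0\<^sub>m (N' - N) (N' - N)),
      mat N' K (\<lambda>(i, j). if i < N then \<psi> $$ (i, j) else 0),
      mat K N' (\<lambda>(i, j). if j < N then \<psi>b $$ (i, j) else 0)))"

definition mmap :: "nat \<Rightarrow> nat \<Rightarrow> nat \<Rightarrow> triple \<Rightarrow> triple \<Rightarrow> triple" where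
  "mmap K N1 N2 x y = (case x of (B1, \<psi>1, \<psi>b1) \<Rightarrow> case y of (B2, \<psi>2, \<psi>b2) \<Rightarrow>
     (four_block_mat B1 (\<psi>1 * \<psi>b2) (- (\<psi>2 * \<psi>b1)) B2,
      mat (N1 + N2) K (\<lambda>(i, j). if i < N1 then \<psi>1 $$ (i, j) else \<psi>2 $$ (i - N1, j)),
      mat K (N1 + N2) (\<lambda>(i, j). if j < N1 then \<psi>b1 $$ (i, j) else \<psi>b2 $$ (i, j - N1))))"

end

theory Submission
  imports Defs
begin

text \<open>In \<open>m(x, y)\<close> the block \<open>-\<psi>2 \<psi>b1\<close> cancels against the corresponding block of
  \<open>\<psi> \<psi>b\<close>, so \<open>Btilde (m(x, y)) / 2\<close> is block upper triangular, with diagonal blocks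
  \<open>A1 = Btilde x / 2\<close>, \<open>A2 = Btilde y / 2\<close> and corner \<open>\<psi>1 \<psi>b2\<close>. The corner of its \<open>j\<close>-th
  power is \<open>\<Sum>i<j. A1^i \<psi>1 \<psi>b2 A2^(j-1-i)\<close>; sandwiched between \<open>\<psi>b\<close> and \<open>\<psi>\<close> it gives the
  interior terms of the Cauchy product of the coefficients of \<open>\<pi>(x)\<close> and \<open>\<pi>(y)\<close>, while the
  diagonal blocks give the two boundary terms. Part (1) is the special case \<open>y = 0\<close>:
  \<open>\<iota>(x) = m(x, 0)\<close> and \<open>\<pi>(0) = 1\<close>.\<close>

text \<open>Variants of library rules whose side conditions \<open>simp\<close> can discharge: the library versions
  ask for \<open>carrier_mat\<close> memberships with inner dimensions that do not occur in the conclusion.\<close>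

lemma assoc_mult_mat_dims:
  "dim_col A = dim_row B \<Longrightarrow> dim_col B = dim_row C \<Longrightarrow> A * B * C = A * (B * C)"
  by (rule assoc_mult_mat[of A "dim_row A" "dim_col A" B "dim_col B" C "dim_col C"]) auto

lemma add_mult_distrib_mat_dims:
  "dim_row A = dim_row B \<Longrightarrow> dim_col A = dim_col B \<Longrightarrow> dim_col A = dim_row C
   \<Longrightarrow> (A + B) * C = A * C + B * (C :: 'a :: semiring_0 mat)"
  by (rule add_mult_distrib_mat[of A "dim_row A" "dim_col A"]) auto

lemma mult_add_distrib_mat_dims:
  "dim_row B = dim_row C \<Longrightarrow> dim_col B = dim_col C \<Longrightarrow> dim_col A = dim_row B
   \<Longrightarrow> A * (B + C) = A * B + A * (C :: 'a :: semiring_0 mat)"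
  by (rule mult_add_distrib_mat[of A "dim_row A" "dim_col A"]) auto

lemmas mult_mat_dims_simps = assoc_mult_mat_dims add_mult_distrib_mat_dims mult_add_distrib_mat_dims

primrec triangular_corner :: "'a :: semiring_1 mat \<Rightarrow> 'a mat \<Rightarrow> 'a mat \<Rightarrow> nat \<Rightarrow> 'a mat" where
  "triangular_corner A C D 0 = 0\<^sub>m (dim_row C) (dim_col C)"
| "triangular_corner A C D (Suc j) = A ^\<^sub>m j * C + triangular_corner A C D j * D"

lemma triangular_corner_carrier:
  assumes "A \<in> carrier_mat n n" "C \<in> carrier_mat n m" "D \<in> carrier_mat m m"
  shows "triangular_corner A C D j \<in> carrier_mat n m"
  using assms by (induction j) auto

lemma four_block_mat_upper_pow:
  assumes A: "A \<in> carrier_mat n n" and C: "C \<in> carrier_mat n m" and D: "D \<in> carrier_mat m m"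
  shows "four_block_mat A C (0\<^sub>m m n) D ^\<^sub>m j
       = four_block_mat (A ^\<^sub>m j) (triangular_corner A C D j) (0\<^sub>m m n) (D ^\<^sub>m j)"
proof (induction j)
  case 0
  show ?case using A C D by simp
next
  case (Suc j)
  have "triangular_corner A C D j \<in> carrier_mat n m"
    "A ^\<^sub>m j * A \<in> carrier_mat n n" "D ^\<^sub>m j * D \<in> carrier_mat m m"
    using triangular_corner_carrier[OF A C D] A D by auto
  then show ?case
    using A C D
    by (simp add: Suc mult_four_block_mat[of _ n n _ m _ m _ _ n _ m] right_add_zero_mat left_add_zero_mat)
qed

lemma triangular_corner_sandwich_index:
  assumes A: "A \<in> carrier_mat n n" and D: "D \<in> carrier_mat m m"
    and X: "X \<in> carrier_mat n r" and W: "W \<in> carrier_mat r m"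
    and Y: "Y \<in> carrier_mat k n" and Z: "Z \<in> carrier_mat m l"
    and a: "a < k" and b: "b < l"
  shows "(Y * triangular_corner A (X * W) D j * Z) $$ (a, b)
       = (\<Sum>i<j. (Y * A ^\<^sub>m i * X * (W * D ^\<^sub>m (j - 1 - i) * Z)) $$ (a, b))"
  using Z b
proof (induction j arbitrary: Z l)
  case 0
  then show ?case using X W Y a by simp
next
  case (Suc j)
  have corner: "triangular_corner A (X * W) D j \<in> carrier_mat n m"
    using triangular_corner_carrier[OF A mult_carrier_mat[OF X W] D] .
  have split: "Y * triangular_corner A (X * W) D (Suc j) * Z
      = Y * A ^\<^sub>m j * X * (W * D ^\<^sub>m 0 * Z) + Y * triangular_corner A (X * W) D j * (D * Z)"
    using A D X W Y Suc.prems corner by (simp add: mult_mat_dims_simps)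
  have shift: "W * D ^\<^sub>m (j - 1 - i) * (D * Z) = W * D ^\<^sub>m (Suc j - 1 - i) * Z" if "i < j" for i
  proof -
    have "Suc j - 1 - i = Suc (j - 1 - i)" using that by simp
    then show ?thesis using D W Suc.prems by (simp add: mult_mat_dims_simps)
  qed
  have "(Y * triangular_corner A (X * W) D j * (D * Z)) $$ (a, b)
      = (\<Sum>i<j. (Y * A ^\<^sub>m i * X * (W * D ^\<^sub>m (Suc j - 1 - i) * Z)) $$ (a, b))"
    using Suc.IH[of "D * Z" l] D Suc.prems shift by (simp del: index_mult_mat(1))
  then show ?case
    unfolding split using A D X W Y Suc.prems corner a
    by (simp add: sum.lessThan_Suc add.commute del: index_mult_mat(1))
qed

lemma pi_map_0: "pi_map K x 0 = 1\<^sub>m K"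
  by (cases x) (simp add: pi_map_def)

lemma pi_map_Suc:
  "pi_map K (B, \<psi>, \<psi>b) (Suc j) = \<psi>b * ((1/2 :: complex) \<cdot>\<^sub>m (B + \<psi> * \<psi>b)) ^\<^sub>m j * \<psi>"
  by (simp add: pi_map_def Btilde_def)

lemma pi_map_carrier: "x \<in> Rep N K \<Longrightarrow> pi_map K x i \<in> carrier_mat K K"
  by (cases i) (auto simp: pi_map_def Rep_def Btilde_def)

lemma loop_mult_Suc_index:
  assumes "a < K" "b < K"
  shows "loop_mult K g h (Suc j) $$ (a, b)
       = (g 0 * h (Suc j)) $$ (a, b) + (\<Sum>i<j. (g (Suc i) * h (j - i)) $$ (a, b))
         + (g (Suc j) * h 0) $$ (a, b)"
  using assms
  unfolding loop_mult_def sum.atMost_Suc_shift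
  unfolding lessThan_Suc_atMost[symmetric] sum.lessThan_Suc
  by (simp add: add.assoc)

text \<open>Stacking of blocks is written as \<open>four_block_mat\<close> with blocks of width or height 0.\<close>

lemma mmap_block_form:
  assumes "\<psi>1 \<in> carrier_mat N1 K" "\<psi>b1 \<in> carrier_mat K N1"
    and "\<psi>2 \<in> carrier_mat N2 K" "\<psi>b2 \<in> carrier_mat K N2"
  shows "mmap K N1 N2 (B1, \<psi>1, \<psi>b1) (B2, \<psi>2, \<psi>b2)
       = (four_block_mat B1 (\<psi>1 * \<psi>b2) (- (\<psi>2 * \<psi>b1)) B2,
          four_block_mat \<psi>1 (0\<^sub>m N1 0) \<psi>2 (0\<^sub>m N2 0),
          four_block_mat \<psi>b1 \<psi>b2 (0\<^sub>m 0 N1) (0\<^sub>m 0 N2))"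
  unfolding mmap_def using assms by (auto intro!: eq_matI)

lemma half_Btilde_mmap:
  assumes B1: "B1 \<in> carrier_mat N1 N1" and \<psi>1: "\<psi>1 \<in> carrier_mat N1 K" and \<psi>b1: "\<psi>b1 \<in> carrier_mat K N1"
    and B2: "B2 \<in> carrier_mat N2 N2" and \<psi>2: "\<psi>2 \<in> carrier_mat N2 K" and \<psi>b2: "\<psi>b2 \<in> carrier_mat K N2"
  shows "(1/2 :: complex) \<cdot>\<^sub>m Btilde (mmap K N1 N2 (B1, \<psi>1, \<psi>b1) (B2, \<psi>2, \<psi>b2))
       = four_block_mat ((1/2) \<cdot>\<^sub>m (B1 + \<psi>1 * \<psi>b1)) (\<psi>1 * \<psi>b2) (0\<^sub>m N2 N1)
           ((1/2) \<cdot>\<^sub>m (B2 + \<psi>2 * \<psi>b2))"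
proof -
  have "four_block_mat \<psi>1 (0\<^sub>m N1 0) \<psi>2 (0\<^sub>m N2 0) * four_block_mat \<psi>b1 \<psi>b2 (0\<^sub>m 0 N1) (0\<^sub>m 0 N2)
      = four_block_mat (\<psi>1 * \<psi>b1) (\<psi>1 * \<psi>b2) (\<psi>2 * \<psi>b1) (\<psi>2 * \<psi>b2)"
    using assms by (simp add: mult_four_block_mat[of _ N1 K _ 0 _ N2 _ _ N1 _ N2] right_add_zero_mat)
  then show ?thesis
    unfolding mmap_block_form[OF \<psi>1 \<psi>b1 \<psi>2 \<psi>b2] Btilde_def
    using assms by (auto intro!: eq_matI simp: algebra_simps)
qed

lemma pi_map_mmap_Suc:
  assumes B1: "B1 \<in> carrier_mat N1 N1" and \<psi>1: "\<psi>1 \<in> carrier_mat N1 K" and \<psi>b1: "\<psi>b1 \<in> carrier_mat K N1"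
    and B2: "B2 \<in> carrier_mat N2 N2" and \<psi>2: "\<psi>2 \<in> carrier_mat N2 K" and \<psi>b2: "\<psi>b2 \<in> carrier_mat K N2"
  defines "A1 \<equiv> (1/2 :: complex) \<cdot>\<^sub>m (B1 + \<psi>1 * \<psi>b1)" and "A2 \<equiv> (1/2 :: complex) \<cdot>\<^sub>m (B2 + \<psi>2 * \<psi>b2)"
  shows "pi_map K (mmap K N1 N2 (B1, \<psi>1, \<psi>b1) (B2, \<psi>2, \<psi>b2)) (Suc j)
       = \<psi>b1 * A1 ^\<^sub>m j * \<psi>1 + \<psi>b1 * triangular_corner A1 (\<psi>1 * \<psi>b2) A2 j * \<psi>2
         + \<psi>b2 * A2 ^\<^sub>m j * \<psi>2"
proof -
  let ?m = "mmap K N1 N2 (B1, \<psi>1, \<psi>b1) (B2, \<psi>2, \<psi>b2)"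
  let ?T = "triangular_corner A1 (\<psi>1 * \<psi>b2) A2 j"
  have A1: "A1 \<in> carrier_mat N1 N1" and A2: "A2 \<in> carrier_mat N2 N2"
    using assms unfolding A1_def A2_def by auto
  have T: "?T \<in> carrier_mat N1 N2"
    using triangular_corner_carrier[OF A1 _ A2] \<psi>1 \<psi>b2 by auto
  have "pi_map K ?m (Suc j) = four_block_mat \<psi>b1 \<psi>b2 (0\<^sub>m 0 N1) (0\<^sub>m 0 N2)
      * ((1/2 :: complex) \<cdot>\<^sub>m Btilde ?m) ^\<^sub>m j * four_block_mat \<psi>1 (0\<^sub>m N1 0) \<psi>2 (0\<^sub>m N2 0)"
    by (simp add: pi_map_def mmap_block_form[OF \<psi>1 \<psi>b1 \<psi>2 \<psi>b2])
  also have "((1/2 :: complex) \<cdot>\<^sub>m Btilde ?m) ^\<^sub>m j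
      = four_block_mat (A1 ^\<^sub>m j) ?T (0\<^sub>m N2 N1) (A2 ^\<^sub>m j)"
    unfolding half_Btilde_mmap[OF assms(1-6)] A1_def[symmetric] A2_def[symmetric]
    using A1 A2 \<psi>1 \<psi>b2 by (simp add: four_block_mat_upper_pow)
  also have "four_block_mat \<psi>b1 \<psi>b2 (0\<^sub>m 0 N1) (0\<^sub>m 0 N2) * \<dots>
      = four_block_mat (\<psi>b1 * A1 ^\<^sub>m j) (\<psi>b1 * ?T + \<psi>b2 * A2 ^\<^sub>m j) (0\<^sub>m 0 N1) (0\<^sub>m 0 N2)"
    using A1 A2 T \<psi>b1 \<psi>b2
    by (simp add: mult_four_block_mat[of _ K N1 _ N2 _ 0 _ _ N1 _ N2] right_add_zero_mat)
  also have "\<dots> * four_block_mat \<psi>1 (0\<^sub>m N1 0) \<psi>2 (0\<^sub>m N2 0)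
      = \<psi>b1 * A1 ^\<^sub>m j * \<psi>1 + \<psi>b1 * ?T * \<psi>2 + \<psi>b2 * A2 ^\<^sub>m j * \<psi>2"
    using A1 A2 T \<psi>1 \<psi>b1 \<psi>2 \<psi>b2
    by (auto simp: mult_four_block_mat[of _ K N1 _ N2 _ 0 _ _ K _ 0] mult_mat_dims_simps intro!: eq_matI)
  finally show ?thesis .
qed

lemma pi_map_mmap_Suc_index:
  assumes B1: "B1 \<in> carrier_mat N1 N1" and \<psi>1: "\<psi>1 \<in> carrier_mat N1 K" and \<psi>b1: "\<psi>b1 \<in> carrier_mat K N1"
    and B2: "B2 \<in> carrier_mat N2 N2" and \<psi>2: "\<psi>2 \<in> carrier_mat N2 K" and \<psi>b2: "\<psi>b2 \<in> carrier_mat K N2"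
    and a: "a < K" and b: "b < K"
  defines "g \<equiv> pi_map K (B1, \<psi>1, \<psi>b1)" and "h \<equiv> pi_map K (B2, \<psi>2, \<psi>b2)"
  shows "pi_map K (mmap K N1 N2 (B1, \<psi>1, \<psi>b1) (B2, \<psi>2, \<psi>b2)) (Suc j) $$ (a, b)
       = h (Suc j) $$ (a, b) + (\<Sum>i<j. (g (Suc i) * h (Suc (j - 1 - i))) $$ (a, b)) + g (Suc j) $$ (a, b)"
proof -
  define A1 where "A1 = (1/2 :: complex) \<cdot>\<^sub>m (B1 + \<psi>1 * \<psi>b1)"
  define A2 where "A2 = (1/2 :: complex) \<cdot>\<^sub>m (B2 + \<psi>2 * \<psi>b2)"
  let ?T = "triangular_corner A1 (\<psi>1 * \<psi>b2) A2 j"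
  have A1: "A1 \<in> carrier_mat N1 N1" and A2: "A2 \<in> carrier_mat N2 N2"
    using assms unfolding A1_def A2_def by auto
  have T: "?T \<in> carrier_mat N1 N2"
    using triangular_corner_carrier[OF A1 _ A2] \<psi>1 \<psi>b2 by auto
  have "(\<psi>b1 * ?T * \<psi>2) $$ (a, b)
      = (\<Sum>i<j. (\<psi>b1 * A1 ^\<^sub>m i * \<psi>1 * (\<psi>b2 * A2 ^\<^sub>m (j - 1 - i) * \<psi>2)) $$ (a, b))"
    by (rule triangular_corner_sandwich_index[OF A1 A2 \<psi>1 \<psi>b2 \<psi>b1 \<psi>2 a b])
  then show ?thesis
    unfolding pi_map_mmap_Suc[OF B1 \<psi>1 \<psi>b1 B2 \<psi>2 \<psi>b2] g_def h_def pi_map_Suc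
      A1_def[symmetric] A2_def[symmetric]
    using a b A1 A2 T \<psi>1 \<psi>b1 \<psi>2 \<psi>b2 by (simp add: add.commute del: index_mult_mat(1))
qed

lemma mmap_Rep: "x \<in> Rep N1 K \<Longrightarrow> y \<in> Rep N2 K \<Longrightarrow> mmap K N1 N2 x y \<in> Rep (N1 + N2) K"
  by (auto simp: Rep_def mmap_def)

lemma pi_map_mmap:
  assumes "x \<in> Rep N1 K" "y \<in> Rep N2 K"
  shows "pi_map K (mmap K N1 N2 x y) = loop_mult K (pi_map K x) (pi_map K y)"
proof
  fix n
  obtain B1 \<psi>1 \<psi>b1 where x: "x = (B1, \<psi>1, \<psi>b1)" by (cases x)
  obtain B2 \<psi>2 \<psi>b2 where y: "y = (B2, \<psi>2, \<psi>b2)" by (cases y)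
  have carriers: "B1 \<in> carrier_mat N1 N1" "\<psi>1 \<in> carrier_mat N1 K" "\<psi>b1 \<in> carrier_mat K N1"
    "B2 \<in> carrier_mat N2 N2" "\<psi>2 \<in> carrier_mat N2 K" "\<psi>b2 \<in> carrier_mat K N2"
    using assms unfolding x y Rep_def by auto
  have shift: "pi_map K y (j - i) = pi_map K y (Suc (j - 1 - i))" if "i < j" for i j
    using that by (simp add: Suc_diff_Suc)
  show "pi_map K (mmap K N1 N2 x y) n = loop_mult K (pi_map K x) (pi_map K y) n"
  proof (rule eq_matI)
    fix a b assume "a < dim_row (loop_mult K (pi_map K x) (pi_map K y) n)"
      and "b < dim_col (loop_mult K (pi_map K x) (pi_map K y) n)"
    then have a: "a < K" and b: "b < K" by (simp_all add: loop_mult_def)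
    show "pi_map K (mmap K N1 N2 x y) n $$ (a, b) = loop_mult K (pi_map K x) (pi_map K y) n $$ (a, b)"
    proof (cases n)
      case 0
      then show ?thesis using a b by (simp add: loop_mult_def pi_map_0)
    next
      case (Suc j)
      show ?thesis
        using a b shift[of _ j]
          pi_map_carrier[OF assms(1), of "Suc j"] pi_map_carrier[OF assms(2), of "Suc j"]
        unfolding Suc loop_mult_Suc_index[OF a b]
        by (simp add: pi_map_0 pi_map_mmap_Suc_index[OF carriers a b] x y add.commute
            left_mult_one_mat right_mult_one_mat del: index_mult_mat(1))
    qed
  qed (use pi_map_carrier[OF mmap_Rep[OF assms], of n] in \<open>simp_all add: loop_mult_def\<close>)
qed

definition loop_one :: "nat \<Rightarrow> nat \<Rightarrow> complex mat" where
  "loop_one K i = (if i = 0 then 1\<^sub>m K else 0\<^sub>m K K)"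

lemma loop_mult_loop_one_right:
  assumes "\<And>i. g i \<in> carrier_mat K K"
  shows "loop_mult K g (loop_one K) = g"
proof
  fix n
  show "loop_mult K g (loop_one K) n = g n"
  proof (rule eq_matI)
    fix a b assume "a < dim_row (g n)" "b < dim_col (g n)"
    then have a: "a < K" and b: "b < K" using assms[of n] by auto
    have "(g i * loop_one K (n - i)) $$ (a, b) = (if i = n then g n $$ (a, b) else 0)" if "i \<le> n" for i
      using that a b assms[of i] by (auto simp: loop_one_def)
    then show "loop_mult K g (loop_one K) n $$ (a, b) = g n $$ (a, b)"
      using a b by (simp add: loop_mult_def)
  qed (use assms[of n] in \<open>auto simp: loop_mult_def\<close>)
qed

lemma pi_map_zero_triple: "pi_map K (0\<^sub>m M M, 0\<^sub>m M K, 0\<^sub>m K M) = loop_one K"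
proof
  fix i
  show "pi_map K (0\<^sub>m M M, 0\<^sub>m M K, 0\<^sub>m K M) i = loop_one K i"
    by (cases i) (auto simp: pi_map_def loop_one_def Btilde_def intro!: eq_matI)
qed

lemma iota_eq_mmap_zero:
  assumes "N \<le> N'" and "x \<in> Rep N K"
  shows "iota K N N' x = mmap K N (N' - N) x (0\<^sub>m (N' - N) (N' - N), 0\<^sub>m (N' - N) K, 0\<^sub>m K (N' - N))"
  using assms unfolding iota_def mmap_def Rep_def by (auto intro: eq_matI)

lemma pi_map_iota:
  assumes "N \<le> N'" and x: "x \<in> Rep N K"
  shows "pi_map K (iota K N N' x) = pi_map K x"
proof -
  let ?M = "N' - N"
  have zero: "(0\<^sub>m ?M ?M, 0\<^sub>m ?M K, 0\<^sub>m K ?M) \<in> Rep ?M K"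
    by (simp add: Rep_def)
  show ?thesis
    unfolding iota_eq_mmap_zero[OF assms] pi_map_mmap[OF x zero] pi_map_zero_triple
    using pi_map_carrier[OF x] by (rule loop_mult_loop_one_right)
qed

theorem mainTheorem14:
  shows "(\<forall>K N N' x. N < N' \<and> x \<in> Rep N K \<longrightarrow> pi_map K (iota K N N' x) = pi_map K x)
       \<and> (\<forall>K N1 N2 x y. x \<in> Rep N1 K \<and> y \<in> Rep N2 K \<longrightarrow>
            pi_map K (mmap K N1 N2 x y) = loop_mult K (pi_map K x) (pi_map K y))"
  by (auto intro: pi_map_iota pi_map_mmap)

end
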